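(* Let $G$ be an additive group and let $(X,\rho)$ be the metric space described below. The map $\varphi:X\to(0,+\infty)$, $\varphi((f,a_f))=a_f$, is a submetry, i.e. it maps every open ball $B(x,r)$ in $X$ onto the ball of the same radius $r$ centered at $\varphi(x)$ in $(0,+\infty)$ (with the standard metric $|s-t|$).
   Context: A function on an interval $(\alpha,\beta)$ is piecewise constant from the left if for every $x$ there is $\varepsilon>0$ with $f$ constant on $[x-\varepsilon,x]$. $X$ is the set of pairs $(f,a_f)$, $a_f>0$ real, $f:(a_f,+\infty)\to G$ piecewise constant from the left with $f|_{(b_f,+\infty)}\equiv0$ for some $b_f\ge a_f$. Order: $(f,a_f)\preceq(g,a_g)$ iff $a_f\le a_g$ and $f|_{(a_g,+\infty)}=g$; any two elements $p,q$ have a supremum $p\vee q$. Metric: $\rho((f,a_f),(g,a_g))=|a_f-a_g|$ if the pairs are comparable, and $\rho(p,q)=\rho(p,p\vee q)+\rho(p\vee q,q)$ otherwise. *)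

theory Defs
  imports "HOL-Analysis.Analysis"
begin

text \<open>An element (f, a) of X: a > 0 and f : (a,+\<infinity>) \<rightarrow> G. Since HOL functions are
total, f is represented by a total function that is normalised to 0 on (-\<infinity>, a].\<close>

definition pc_left :: "real \<Rightarrow> (real \<Rightarrow> 'g) \<Rightarrow> bool" where
  "pc_left a f \<longleftrightarrow> (\<forall>x>a. \<exists>\<epsilon>>0. x - \<epsilon> > a \<and> (\<forall>y\<in>{x-\<epsilon>..x}. f y = f x))"

definition Xset :: "((real \<Rightarrow> 'g::group_add) \<times> real) set" where
  "Xset = {(f, a). a > 0 \<and> (\<forall>x\<le>a. f x = 0) \<and> pc_left a f \<and>
                    (\<exists>b\<ge>a. \<forall>x>b. f x = 0)}"

definition Xle :: "((real \<Rightarrow> 'g::group_add) \<times> real) \<Rightarrow> ((real \<Rightarrow> 'g) \<times> real) \<Rightarrow> bool" where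
  "Xle p q \<longleftrightarrow> snd p \<le> snd q \<and> (\<forall>x>snd q. fst p x = fst q x)"

definition Xsup :: "((real \<Rightarrow> 'g::group_add) \<times> real) \<Rightarrow> ((real \<Rightarrow> 'g) \<times> real) \<Rightarrow> ((real \<Rightarrow> 'g) \<times> real)" where
  "Xsup p q = (THE s. s \<in> Xset \<and> Xle p s \<and> Xle q s \<and>
                      (\<forall>t\<in>Xset. Xle p t \<and> Xle q t \<longrightarrow> Xle s t))"

definition Xdist :: "((real \<Rightarrow> 'g::group_add) \<times> real) \<Rightarrow> ((real \<Rightarrow> 'g) \<times> real) \<Rightarrow> real" where
  "Xdist p q = (if Xle p q \<or> Xle q p then \<bar>snd p - snd q\<bar>
                else \<bar>snd p - snd (Xsup p q)\<bar> + \<bar>snd (Xsup p q) - snd q\<bar>)"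

end

theory Submission
  imports Defs
begin

text \<open>The distance always dominates the distance of the levels: for incomparable pairs it is a
sum of two level distances through the supremum, so the triangle inequality in \<open>\<real>\<close> applies.
Equality holds for comparable pairs, and every level \<open>t > 0\<close> carries an element comparable
to a given \<open>(f, a)\<close>: restrict \<open>f\<close> to \<open>(t, +\<infinity>)\<close> if \<open>t \<ge> a\<close>, and extend it by \<open>0\<close> on
\<open>(t, a]\<close> if \<open>t < a\<close>.\<close>

lemma abs_snd_diff_le_Xdist: "\<bar>snd p - snd q\<bar> \<le> Xdist p q"
  unfolding Xdist_def by auto

lemma Xdist_comparable:
  assumes "Xle p q \<or> Xle q p"
  shows "Xdist p q = \<bar>snd p - snd q\<bar>"
  using assms unfolding Xdist_def by simp

lemma pc_left_restrict:
  assumes pc: "pc_left a f" and "a \<le> t" and agree: "\<forall>y>t. g y = f y"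
  shows "pc_left t g"
  unfolding pc_left_def
proof (intro allI impI)
  fix x assume "x > t"
  then have "x > a" using \<open>a \<le> t\<close> by simp
  with pc obtain e where "e > 0" and f_const: "\<forall>y\<in>{x-e..x}. f y = f x"
    unfolding pc_left_def by blast
  define e' where "e' = min e ((x - t) / 2)"
  have "e' > 0"
    using \<open>e > 0\<close> \<open>x > t\<close> by (simp add: e'_def)
  have "e' \<le> e" "e' \<le> (x - t) / 2"
    unfolding e'_def by (rule min.cobounded1, rule min.cobounded2)
  have "x - e' > t"
    using \<open>e' \<le> (x - t) / 2\<close> \<open>x > t\<close> by (simp add: field_simps)
  have "g y = g x" if "y \<in> {x-e'..x}" for y
  proof -
    have "y > t" "y \<in> {x-e..x}"
      using that \<open>e' \<le> e\<close> \<open>x - e' > t\<close> by auto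
    then show ?thesis
      using f_const agree \<open>x > t\<close> by metis
  qed
  with \<open>e' > 0\<close> \<open>x - e' > t\<close>
  show "\<exists>\<epsilon>>0. x - \<epsilon> > t \<and> (\<forall>y\<in>{x-\<epsilon>..x}. g y = g x)"
    by blast
qed

lemma pc_left_extend_zero:
  assumes pc: "pc_left a f" and zero: "\<forall>y\<le>a. f y = 0" and "t \<le> a"
  shows "pc_left t f"
  unfolding pc_left_def
proof (intro allI impI)
  fix x assume "x > t"
  show "\<exists>\<epsilon>>0. x - \<epsilon> > t \<and> (\<forall>y\<in>{x-\<epsilon>..x}. f y = f x)"
  proof (cases "x \<le> a")
    case True
    have "(x - t) / 2 > 0" "x - (x - t) / 2 > t"
      using \<open>x > t\<close> by (simp_all add: field_simps)
    moreover have "\<forall>y\<in>{x - (x - t) / 2..x}. f y = f x"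
      using zero True by simp
    ultimately show ?thesis by blast
  next
    case False
    with pc obtain e where "e > 0" "x - e > a" "\<forall>y\<in>{x-e..x}. f y = f x"
      unfolding pc_left_def by (meson not_le)
    moreover have "x - e > t"
      using \<open>x - e > a\<close> \<open>t \<le> a\<close> by simp
    ultimately show ?thesis by blast
  qed
qed

lemma Xset_restrict:
  assumes "(f, a) \<in> Xset" and "a \<le> t"
  shows "((\<lambda>s. if s \<le> t then 0 else f s), t) \<in> Xset"
proof -
  from assms(1) obtain b where "a > 0" "pc_left a f" "b \<ge> a" "\<forall>x>b. f x = 0"
    unfolding Xset_def by auto
  moreover have "pc_left t (\<lambda>s. if s \<le> t then 0 else f s)"
    using \<open>pc_left a f\<close> \<open>a \<le> t\<close> by (rule pc_left_restrict) simp
  ultimately show ?thesis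
    using \<open>a \<le> t\<close> unfolding Xset_def
    by (auto intro!: exI[of _ "max b t"])
qed

lemma Xset_extend_zero:
  assumes "(f, a) \<in> Xset" and "t \<le> a" and "t > 0"
  shows "(f, t) \<in> Xset"
proof -
  from assms(1) obtain b where "\<forall>x\<le>a. f x = 0" "pc_left a f" "b \<ge> a" "\<forall>x>b. f x = 0"
    unfolding Xset_def by auto
  moreover have "pc_left t f"
    using \<open>pc_left a f\<close> \<open>\<forall>x\<le>a. f x = 0\<close> \<open>t \<le> a\<close> by (rule pc_left_extend_zero)
  ultimately show ?thesis
    using assms(2,3) unfolding Xset_def by (auto intro!: exI[of _ b])
qed

lemma Xset_comparable_at_level:
  assumes "p \<in> Xset" and "t > 0"
  obtains q where "q \<in> Xset" and "Xle p q \<or> Xle q p" and "snd q = t"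
proof -
  obtain f a where p: "p = (f, a)" by (cases p)
  show ?thesis
  proof (cases "a \<le> t")
    case True
    have "((\<lambda>s. if s \<le> t then 0 else f s), t) \<in> Xset"
      using assms(1) True unfolding p by (rule Xset_restrict)
    moreover have "Xle p ((\<lambda>s. if s \<le> t then 0 else f s), t)"
      using True unfolding p Xle_def by simp
    ultimately show ?thesis using that by fastforce
  next
    case False
    have "(f, t) \<in> Xset"
      using assms False unfolding p by (auto intro: Xset_extend_zero)
    moreover have "Xle (f, t) p"
      using False unfolding p Xle_def by simp
    ultimately show ?thesis using that by fastforce
  qed
qed

theorem lemma7:
  fixes x :: "(real \<Rightarrow> 'g::group_add) \<times> real" and r :: real
  assumes "x \<in> Xset" and "r > 0"
  shows "snd ` {y \<in> Xset. Xdist x y < r} = {t. t > 0 \<and> \<bar>t - snd x\<bar> < r}"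
proof
  show "snd ` {y \<in> Xset. Xdist x y < r} \<subseteq> {t. t > 0 \<and> \<bar>t - snd x\<bar> < r}"
  proof
    fix t assume "t \<in> snd ` {y \<in> Xset. Xdist x y < r}"
    then obtain y where "y \<in> Xset" "Xdist x y < r" "t = snd y" by blast
    moreover have "\<bar>snd x - snd y\<bar> \<le> Xdist x y" by (rule abs_snd_diff_le_Xdist)
    moreover have "snd y > 0" using \<open>y \<in> Xset\<close> unfolding Xset_def by auto
    ultimately show "t \<in> {t. t > 0 \<and> \<bar>t - snd x\<bar> < r}" by simp
  qed
next
  show "{t. t > 0 \<and> \<bar>t - snd x\<bar> < r} \<subseteq> snd ` {y \<in> Xset. Xdist x y < r}"
  proof
    fix t assume t: "t \<in> {t. t > 0 \<and> \<bar>t - snd x\<bar> < r}"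
    then obtain y where y: "y \<in> Xset" "Xle x y \<or> Xle y x" "snd y = t"
      using Xset_comparable_at_level[OF assms(1)] by blast
    then have "Xdist x y < r"
      using t by (simp add: Xdist_comparable abs_minus_commute)
    with y show "t \<in> snd ` {y \<in> Xset. Xdist x y < r}" by blast
  qed
qed

end
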